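(* Let $A\in\mathbb{R}^{n\times d}$, $k\ge1$, and let $B\in\mathbb{R}^{n\times m}$ satisfy $$BB^T\preceq AA^T\preceq BB^T+\tfrac12\cdot\tfrac{\|A-A_k\|_F^2}{k}I_n .$$ For each column $a_i$ of $A$ define $\tilde\tau_i=a_i^T\Big(BB^T+\frac{\|A\|_F^2-\|B_k\|_F^2}{k}I_n\Big)^+a_i$. Then for all $i$, $$\tfrac12\bar\tau_i(A)\le\tilde\tau_i\le2\bar\tau_i(A).$$
   Context: For any matrix $N$, $N_k$ denotes a best rank-$k$ approximation in Frobenius norm, so $\|N_k\|_F^2$ is the sum of the $k$ largest squared singular values of $N$. $^+$ is the Moore–Penrose pseudoinverse and $\preceq$ the Loewner order. Ridge leverage score: $\bar\tau_i(A)=a_i^T\big(AA^T+\frac{\|A-A_k\|_F^2}{k}I_n\big)^+a_i$. *)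

theory Defs
  imports "HOL-Analysis.Analysis"
begin

text \<open>Matrices are rendered as real^'c^'r (rows indexed by 'r, columns by 'c).\<close>

definition frob_sq :: "real^'c^'r \<Rightarrow> real" where
  "frob_sq N = (\<Sum>i\<in>UNIV. \<Sum>j\<in>UNIV. (N $ i $ j)^2)"

definition is_best_rank_approx :: "nat \<Rightarrow> real^'c^'r \<Rightarrow> real^'c^'r \<Rightarrow> bool" where
  "is_best_rank_approx k N M \<longleftrightarrow> rank M \<le> k \<and>
     (\<forall>M'. rank M' \<le> k \<longrightarrow> frob_sq (N - M) \<le> frob_sq (N - M'))"

definition best_rank :: "nat \<Rightarrow> real^'c^'r \<Rightarrow> real^'c^'r" where
  "best_rank k N = (SOME M. is_best_rank_approx k N M)"

definition pinv :: "real^'c^'r \<Rightarrow> real^'r^'c" where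
  "pinv A = (THE X. A ** X ** A = A \<and> X ** A ** X = X \<and>
                    transpose (A ** X) = A ** X \<and> transpose (X ** A) = X ** A)"

definition loewner_le :: "real^'n^'n \<Rightarrow> real^'n^'n \<Rightarrow> bool" where
  "loewner_le X Y \<longleftrightarrow> (\<forall>x. x \<bullet> (X *v x) \<le> x \<bullet> (Y *v x))"

definition ridge_lev :: "nat \<Rightarrow> real^'d^'n \<Rightarrow> 'd \<Rightarrow> real" where
  "ridge_lev k A i = column i A \<bullet>
     (pinv (A ** transpose A + (frob_sq (A - best_rank k A) / real k) *\<^sub>R mat 1) *v column i A)"

end

theory Submission
  imports Defs
begin

text \<open>
  Write \<open>\<gamma> = \<parallel>A - A\<^sub>k\<parallel>\<^sub>F\<^sup>2 / k\<close> and \<open>\<mu> = (\<parallel>A\<parallel>\<^sub>F\<^sup>2 - \<parallel>B\<^sub>k\<parallel>\<^sub>F\<^sup>2) / k\<close>.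
  By Eckart--Young, \<open>\<parallel>N\<^sub>k\<parallel>\<^sub>F\<^sup>2\<close> is the maximum of \<open>\<parallel>P N\<parallel>\<^sub>F\<^sup>2 = tr (P N N\<^sup>T P)\<close> over
  orthogonal projections \<open>P\<close> of rank at most \<open>k\<close>, so it is monotone in \<open>N N\<^sup>T\<close> for the
  Loewner order and grows by at most \<open>k c\<close> when \<open>N N\<^sup>T\<close> grows by \<open>c I\<close>.  The hypotheses
  therefore give \<open>\<gamma> \<le> \<mu> \<le> 3/2 \<gamma>\<close>, whence \<open>(A A\<^sup>T + \<gamma> I)/2 \<preceq> B B\<^sup>T + \<mu> I \<preceq> 2 (A A\<^sup>T + \<gamma> I)\<close>.
  For \<open>\<gamma> > 0\<close> both matrices are positive definite and inversion reverses the Loewner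
  order; for \<open>\<gamma> = 0\<close> the two matrices coincide.
\<close>

lemma inner_matrix_vector_transpose:
  "(x::real^'n) \<bullet> (A *v y) = (transpose A *v x) \<bullet> y"
  by (simp add: dot_lmul_matrix)

lemma frob_sq_eq_inner: "frob_sq N = N \<bullet> N"
  by (simp add: frob_sq_def inner_vec_def power2_eq_square)

lemma frob_sq_nonneg: "0 \<le> frob_sq N"
  by (simp add: frob_sq_eq_inner)

lemma quad_add_scalar_mat:
  "x \<bullet> ((X + c *\<^sub>R mat 1) *v x) = x \<bullet> (X *v x) + c * (x \<bullet> (x::real^'n))"
  by (simp add: matrix_vector_mult_add_rdistrib inner_add_right
      scaleR_matrix_vector_assoc[symmetric])

lemma matrix_diff_ldistrib: "(A::real^'n^'m) ** (B - C) = A ** B - A ** C"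
  by (simp add: matrix_matrix_mult_def vec_eq_iff sum_subtractf right_diff_distrib)

lemma matrix_add_rdistrib: "((A::real^'n^'m) + B) ** C = A ** C + B ** C"
  by (simp add: matrix_matrix_mult_def vec_eq_iff sum.distrib distrib_right)

lemma matrix_diff_rdistrib: "((A::real^'n^'m) - B) ** C = A ** C - B ** C"
  by (simp add: matrix_matrix_mult_def vec_eq_iff sum_subtractf left_diff_distrib)

lemma transpose_add: "transpose ((A::real^'n^'m) + B) = transpose A + transpose B"
  by (simp add: transpose_def vec_eq_iff)

lemma transpose_diff: "transpose ((A::real^'n^'m) - B) = transpose A - transpose B"
  by (simp add: transpose_def vec_eq_iff)

lemma inner_matrix_mult_transpose:
  fixes P :: "real^'r^'r" and X Y :: "real^'c^'r"
  shows "(P ** X) \<bullet> Y = X \<bullet> (transpose P ** Y)"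
proof -
  have "(P ** X) \<bullet> Y = (\<Sum>i\<in>UNIV. \<Sum>j\<in>UNIV. \<Sum>l\<in>UNIV. P$i$l * X$l$j * Y$i$j)"
    by (simp add: inner_vec_def matrix_matrix_mult_def sum_distrib_right)
  also have "\<dots> = (\<Sum>i\<in>UNIV. \<Sum>l\<in>UNIV. \<Sum>j\<in>UNIV. P$i$l * X$l$j * Y$i$j)"
    by (intro sum.cong refl sum.swap)
  also have "\<dots> = (\<Sum>l\<in>UNIV. \<Sum>i\<in>UNIV. \<Sum>j\<in>UNIV. P$i$l * X$l$j * Y$i$j)"
    by (rule sum.swap)
  also have "\<dots> = (\<Sum>l\<in>UNIV. \<Sum>j\<in>UNIV. \<Sum>i\<in>UNIV. P$i$l * X$l$j * Y$i$j)"
    by (intro sum.cong refl sum.swap)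
  also have "\<dots> = X \<bullet> (transpose P ** Y)"
    by (simp add: inner_vec_def matrix_matrix_mult_def transpose_def sum_distrib_left
        mult.assoc mult.left_commute)
  finally show ?thesis .
qed

lemma quad_gram: "x \<bullet> (((N::real^'m^'n) ** transpose N) *v x) = (x v* N) \<bullet> (x v* N)"
  by (simp only: matrix_vector_mul_assoc[symmetric] transpose_matrix_vector
      dot_lmul_matrix[symmetric])

lemma transpose_gram: "transpose ((N::real^'m^'n) ** transpose N) = N ** transpose N"
  by (simp add: matrix_transpose_mul)

lemma quad_gram_nonneg: "0 \<le> x \<bullet> (((N::real^'m^'n) ** transpose N) *v x)"
  by (simp add: quad_gram)

lemma frob_sq_matrix_mult_rows:
  "frob_sq ((P::real^'n^'r) ** (N::real^'m^'n)) = (\<Sum>i\<in>UNIV. P$i \<bullet> ((N ** transpose N) *v P$i))"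
proof -
  have "(P ** N)$i = P$i v* N" for i
    by (simp add: vec_eq_iff matrix_matrix_mult_def vector_matrix_mult_def)
  then show ?thesis by (simp add: frob_sq_eq_inner inner_vec_def[of "P ** N"] quad_gram)
qed

lemma symmetric_matrix_eqI_quad:
  fixes X Y :: "real^'n^'n"
  assumes "transpose X = X" "transpose Y = Y" "\<And>x. x \<bullet> (X *v x) = x \<bullet> (Y *v x)"
  shows "X = Y"
proof -
  define D where "D = X - Y"
  have sym: "transpose D = D" using assms by (simp add: D_def transpose_diff)
  have quad: "x \<bullet> (D *v x) = 0" for x
    using assms(3)[of x] by (simp add: D_def matrix_vector_mult_diff_rdistrib inner_diff_right)
  have "D *v x = 0" for x
  proof -
    define y where "y = D *v x"
    have "(x + y) \<bullet> (D *v (x + y)) = 0" by (rule quad)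
    then have "x \<bullet> (D *v y) + y \<bullet> (D *v x) = 0"
      using quad[of x] quad[of y]
      by (simp add: matrix_vector_right_distrib inner_add_left inner_add_right)
    moreover have "x \<bullet> (D *v y) = y \<bullet> (D *v x)"
      by (simp add: inner_matrix_vector_transpose[of x D y] sym inner_commute)
    ultimately have "y \<bullet> y = 0" by (simp add: y_def)
    then show ?thesis by (simp add: y_def)
  qed
  then show ?thesis by (simp add: D_def matrix_eq matrix_vector_mult_diff_rdistrib)
qed

subsection \<open>Orthogonal projections\<close>

definition finite_orthonormal :: "(real^'n) set \<Rightarrow> bool" where
  "finite_orthonormal S \<longleftrightarrow> finite S \<and> pairwise orthogonal S \<and> (\<forall>b\<in>S. b \<bullet> b = 1)"

definition proj_matrix :: "(real^'n) set \<Rightarrow> real^'n^'n" where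
  "proj_matrix S = (\<chi> i j. \<Sum>b\<in>S. b$i * b$j)"

lemma finite_orthonormal_basis_subspace:
  fixes S :: "(real^'n) set"
  assumes "subspace S"
  obtains Bs where "finite_orthonormal Bs" "span Bs = S" "card Bs = dim S"
proof -
  obtain Bs where "pairwise orthogonal Bs" "\<And>x. x \<in> Bs \<Longrightarrow> norm x = 1"
    "independent Bs" "card Bs = dim S" "span Bs = S"
    using orthonormal_basis_subspace[OF assms] by metis
  moreover have "finite_orthonormal Bs"
    using calculation by (auto simp: finite_orthonormal_def norm_eq_1 independent_imp_finite)
  ultimately show ?thesis using that by blast
qed

lemma proj_matrix_vector: "proj_matrix S *v x = (\<Sum>b\<in>S. (b \<bullet> x) *\<^sub>R b)"
proof -
  have "(proj_matrix S *v x)$i = (\<Sum>b\<in>S. (b \<bullet> x) * b$i)" for i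
  proof -
    have "(proj_matrix S *v x)$i = (\<Sum>j\<in>UNIV. \<Sum>b\<in>S. b$i * b$j * x$j)"
      by (simp add: matrix_vector_mult_def proj_matrix_def sum_distrib_right)
    also have "\<dots> = (\<Sum>b\<in>S. (b \<bullet> x) * b$i)"
      by (subst sum.swap) (simp add: inner_vec_def sum_distrib_left sum_distrib_right mult_ac)
    finally show ?thesis .
  qed
  then show ?thesis by (simp add: vec_eq_iff)
qed

lemma proj_matrix_vector_in_span: "proj_matrix S *v x \<in> span S"
  unfolding proj_matrix_vector by (intro span_sum span_scale span_base)

lemma proj_matrix_vector_span:
  assumes S: "finite_orthonormal S" and y: "y \<in> span S"
  shows "proj_matrix S *v y = y"
proof -
  define z where "z = y - proj_matrix S *v y"
  have "z \<in> span S"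
    unfolding z_def using y proj_matrix_vector_in_span by (intro span_diff)
  moreover have "orthogonal z c" if "c \<in> S" for c
  proof -
    have fin: "finite S" using S by (simp add: finite_orthonormal_def)
    have "(\<Sum>b\<in>S - {c}. (b \<bullet> y) * (c \<bullet> b)) = 0"
      using S that by (intro sum.neutral) (auto simp: finite_orthonormal_def pairwise_def orthogonal_def)
    then have "c \<bullet> (proj_matrix S *v y) = c \<bullet> y"
      using sum.remove[OF fin that, of "\<lambda>b. (b \<bullet> y) * (c \<bullet> b)"] S that
      by (simp add: proj_matrix_vector inner_sum_right finite_orthonormal_def)
    then show ?thesis by (simp add: z_def orthogonal_def inner_diff_right inner_commute)
  qed
  ultimately have "orthogonal z z" using orthogonal_to_span by blast
  then show ?thesis by (simp add: z_def orthogonal_self)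
qed

lemma transpose_proj_matrix: "transpose (proj_matrix S) = proj_matrix S"
  by (simp add: transpose_def proj_matrix_def vec_eq_iff mult.commute)

lemma proj_matrix_idem: "finite_orthonormal S \<Longrightarrow> proj_matrix S ** proj_matrix S = proj_matrix S"
  by (simp add: matrix_eq matrix_vector_mul_assoc[symmetric] proj_matrix_vector_span
      proj_matrix_vector_in_span)

lemma trace_proj_matrix: "finite_orthonormal S \<Longrightarrow> trace (proj_matrix S) = real (card S)"
proof -
  assume S: "finite_orthonormal S"
  have "trace (proj_matrix S) = (\<Sum>b\<in>S. \<Sum>i\<in>UNIV. b$i * b$i)"
    by (simp add: trace_def proj_matrix_def sum.swap[of _ UNIV])
  also have "\<dots> = (\<Sum>b\<in>S. 1)"
    using S by (intro sum.cong) (auto simp: finite_orthonormal_def inner_vec_def)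
  finally show ?thesis by simp
qed

lemma inner_self_projection:
  fixes P :: "real^'n^'n"
  assumes sym: "transpose P = P" and idem: "P ** P = P"
  shows "P \<bullet> P = trace P"
proof -
  have "P$j$i = P$i$j" for i j
    using arg_cong[OF sym, of "\<lambda>X. X$i$j"] by (simp add: transpose_def)
  then have "trace (P ** P) = P \<bullet> P"
    by (simp add: trace_def matrix_matrix_mult_def inner_vec_def)
  then show ?thesis by (simp add: idem)
qed

lemma projection_eq_proj_matrix_range:
  fixes P :: "real^'n^'n"
  assumes sym: "transpose P = P" and idem: "P ** P = P"
    and Bs: "finite_orthonormal Bs" "span Bs = range (\<lambda>x. P *v x)"
  shows "P = proj_matrix Bs"
proof -
  have fixes_basis: "b \<bullet> (P *v x) = b \<bullet> x" if "b \<in> Bs" for b x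
  proof -
    have "b \<in> span Bs" using that by (rule span_base)
    then obtain y where "b = P *v y" using Bs(2) by auto
    then have "P *v b = b" by (simp add: matrix_vector_mul_assoc idem)
    then show ?thesis by (simp add: inner_matrix_vector_transpose[of b P] sym)
  qed
  have "P *v x = proj_matrix Bs *v x" for x
  proof -
    have "proj_matrix Bs *v (P *v x) = P *v x" using Bs by (simp add: proj_matrix_vector_span)
    moreover have "proj_matrix Bs *v (P *v x) = proj_matrix Bs *v x"
      using fixes_basis by (simp add: proj_matrix_vector)
    ultimately show ?thesis by simp
  qed
  then show ?thesis by (simp add: matrix_eq)
qed

lemma rank_projection:
  fixes P :: "real^'n^'n"
  assumes "transpose P = P" "P ** P = P"
  shows "real (rank P) = trace P"
proof -
  obtain Bs where Bs: "finite_orthonormal Bs" "span Bs = range (\<lambda>x. P *v x)"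
      "card Bs = dim (range (\<lambda>x. P *v x))"
    using finite_orthonormal_basis_subspace
      [OF linear_subspace_image[OF matrix_vector_mul_linear subspace_UNIV]] by metis
  then show ?thesis
    using projection_eq_proj_matrix_range[OF assms Bs(1,2)]
    by (simp add: trace_proj_matrix rank_dim_range)
qed

definition projections_trace_le :: "nat \<Rightarrow> (real^'n^'n) set" where
  "projections_trace_le k = {P. transpose P = P \<and> P ** P = P \<and> trace P \<le> real k}"

lemma projection_onto_range:
  fixes M :: "real^'c^'r"
  assumes "rank M \<le> k"
  obtains P where "P \<in> projections_trace_le k" "P ** M = M"
proof -
  obtain Bs where Bs: "finite_orthonormal Bs" "span Bs = range (\<lambda>x. M *v x)"
      "card Bs = dim (range (\<lambda>x. M *v x))"
    using finite_orthonormal_basis_subspace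
      [OF linear_subspace_image[OF matrix_vector_mul_linear subspace_UNIV]] by metis
  have "proj_matrix Bs ** M = M"
    using Bs by (simp add: matrix_eq matrix_vector_mul_assoc[symmetric] proj_matrix_vector_span)
  moreover have "proj_matrix Bs \<in> projections_trace_le k"
    using Bs assms
    by (simp add: projections_trace_le_def transpose_proj_matrix proj_matrix_idem
        trace_proj_matrix rank_dim_range)
  ultimately show ?thesis using that by blast
qed

lemma rank_projection_mult_le:
  fixes N :: "real^'c^'r"
  assumes "P \<in> projections_trace_le k"
  shows "rank (P ** N) \<le> k"
proof -
  have "real (rank P) \<le> real k"
    using assms rank_projection[of P] by (simp add: projections_trace_le_def)
  then show ?thesis using rank_mul_le_left[of P N] by simp
qed

lemma compact_projections_trace_le: "compact (projections_trace_le k :: (real^'n^'n) set)"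
proof -
  have "closed {P::real^'n^'n. transpose P = P \<and> P ** P = P \<and> trace P \<le> real k}"
    unfolding transpose_def matrix_matrix_mult_def trace_def
    by (intro closed_Collect_conj closed_Collect_eq closed_Collect_le continuous_intros)
  moreover have "bounded (projections_trace_le k :: (real^'n^'n) set)"
    unfolding bounded_iff
  proof (intro exI ballI)
    fix P :: "real^'n^'n" assume "P \<in> projections_trace_le k"
    then have "P \<bullet> P \<le> real k"
      using inner_self_projection[of P] by (simp add: projections_trace_le_def)
    then show "norm P \<le> sqrt (real k)" by (simp add: norm_eq_sqrt_inner)
  qed
  ultimately show ?thesis by (simp add: compact_eq_bounded_closed projections_trace_le_def)
qed

lemma frob_sq_diff_projection:
  fixes P :: "real^'r^'r" and N M :: "real^'c^'r"
  assumes sym: "transpose P = P" and idem: "P ** P = P" and PM: "P ** M = M"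
  shows "frob_sq (N - M) = frob_sq (N - P ** N) + frob_sq (P ** N - M)"
proof -
  define u where "u = N - P ** N"
  define v where "v = P ** N - M"
  have "v = P ** (N - M)" by (simp add: v_def matrix_diff_ldistrib PM)
  then have "v \<bullet> u = (N - M) \<bullet> (P ** u)" by (simp add: inner_matrix_mult_transpose sym)
  also have "P ** u = 0"
    by (simp add: u_def matrix_diff_ldistrib matrix_mul_assoc idem)
  finally have "u \<bullet> v = 0" by (simp add: inner_commute)
  moreover have "N - M = u + v" by (simp add: u_def v_def)
  ultimately show ?thesis
    by (simp add: frob_sq_eq_inner inner_add_left inner_add_right inner_commute[of v u]
        flip: u_def v_def)
qed

lemma frob_sq_projection_residual:
  fixes P :: "real^'r^'r" and N :: "real^'c^'r"
  assumes "transpose P = P" "P ** P = P"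
  shows "frob_sq (N - P ** N) = frob_sq N - frob_sq (P ** N)"
proof -
  have "(P ** N) \<bullet> (P ** N) = N \<bullet> (P ** N)"
    using assms by (simp add: inner_matrix_mult_transpose matrix_mul_assoc)
  then show ?thesis
    by (simp add: frob_sq_eq_inner inner_diff_left inner_diff_right inner_commute[of "P ** N" N])
qed

subsection \<open>Best rank-\<open>k\<close> approximation\<close>

lemma is_best_rank_approx_best_rank: "is_best_rank_approx k (N::real^'c^'r) (best_rank k N)"
proof -
  have "(0::real^'r^'r) \<in> projections_trace_le k"
    by (simp add: projections_trace_le_def trace_def transpose_def vec_eq_iff)
  moreover have "continuous_on (projections_trace_le k) (\<lambda>P::real^'r^'r. frob_sq (N - P ** N))"
    unfolding frob_sq_eq_inner matrix_matrix_mult_def by (intro continuous_intros)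
  ultimately obtain P0 :: "real^'r^'r" where P0: "P0 \<in> projections_trace_le k"
    and min: "\<And>P. P \<in> projections_trace_le k \<Longrightarrow> frob_sq (N - P0 ** N) \<le> frob_sq (N - P ** N)"
    using continuous_attains_inf[OF compact_projections_trace_le] by blast
  have "is_best_rank_approx k N (P0 ** N)"
    unfolding is_best_rank_approx_def
  proof (intro conjI allI impI)
    show "rank (P0 ** N) \<le> k" using rank_projection_mult_le[OF P0] .
  next
    fix M :: "real^'c^'r" assume "rank M \<le> k"
    then obtain P where P: "P \<in> projections_trace_le k" "P ** M = M"
      by (rule projection_onto_range)
    then have "frob_sq (N - M) = frob_sq (N - P ** N) + frob_sq (P ** N - M)"
      by (intro frob_sq_diff_projection) (auto simp: projections_trace_le_def)
    then show "frob_sq (N - P0 ** N) \<le> frob_sq (N - M)"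
      using min[OF P(1)] frob_sq_nonneg[of "P ** N - M"] by linarith
  qed
  then show ?thesis unfolding best_rank_def by (rule someI)
qed

lemma best_rank_eq_projection:
  fixes N :: "real^'c^'r"
  obtains P where "P \<in> projections_trace_le k" "best_rank k N = P ** N"
proof -
  let ?Nk = "best_rank k N"
  have opt: "rank ?Nk \<le> k" "\<And>M. rank M \<le> k \<Longrightarrow> frob_sq (N - ?Nk) \<le> frob_sq (N - M)"
    using is_best_rank_approx_best_rank[of k N] by (auto simp: is_best_rank_approx_def)
  obtain P where P: "P \<in> projections_trace_le k" "P ** ?Nk = ?Nk"
    using projection_onto_range[OF opt(1)] by blast
  have "frob_sq (N - ?Nk) = frob_sq (N - P ** N) + frob_sq (P ** N - ?Nk)"
    using P by (intro frob_sq_diff_projection) (auto simp: projections_trace_le_def)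
  moreover have "frob_sq (N - ?Nk) \<le> frob_sq (N - P ** N)"
    using opt(2)[OF rank_projection_mult_le[OF P(1)]] .
  ultimately have "(P ** N - ?Nk) \<bullet> (P ** N - ?Nk) = 0"
    using inner_ge_zero[of "P ** N - ?Nk"] by (simp add: frob_sq_eq_inner)
  then show ?thesis using that P(1) by simp
qed

lemma frob_sq_best_rank_residual:
  "frob_sq (N - best_rank k N) = frob_sq N - frob_sq (best_rank k (N::real^'c^'r))"
proof -
  obtain P where "P \<in> projections_trace_le k" "best_rank k N = P ** N"
    by (rule best_rank_eq_projection)
  then show ?thesis by (simp add: frob_sq_projection_residual projections_trace_le_def)
qed

lemma frob_sq_projection_le_best_rank:
  fixes N :: "real^'c^'r"
  assumes P: "P \<in> projections_trace_le k"
  shows "frob_sq (P ** N) \<le> frob_sq (best_rank k N)"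
proof -
  have "frob_sq (N - best_rank k N) \<le> frob_sq (N - P ** N)"
    using is_best_rank_approx_best_rank[of k N] rank_projection_mult_le[OF P]
    by (auto simp: is_best_rank_approx_def)
  then show ?thesis
    using P by (simp add: frob_sq_best_rank_residual frob_sq_projection_residual
        projections_trace_le_def)
qed

lemma frob_sq_best_rank_mono:
  fixes A :: "real^'d^'n" and B :: "real^'m^'n"
  assumes "loewner_le (B ** transpose B) (A ** transpose A)"
  shows "frob_sq (best_rank k B) \<le> frob_sq (best_rank k A)"
proof -
  obtain P where P: "P \<in> projections_trace_le k" "best_rank k B = P ** B"
    by (rule best_rank_eq_projection)
  have "frob_sq (P ** B) \<le> frob_sq (P ** A)"
    using assms by (simp add: frob_sq_matrix_mult_rows loewner_le_def sum_mono)
  then show ?thesis using P frob_sq_projection_le_best_rank[OF P(1), of A] by simp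
qed

lemma frob_sq_best_rank_le_add:
  fixes A :: "real^'d^'n" and B :: "real^'m^'n"
  assumes "loewner_le (A ** transpose A) (B ** transpose B + c *\<^sub>R mat 1)" "0 \<le> c"
  shows "frob_sq (best_rank k A) \<le> frob_sq (best_rank k B) + real k * c"
proof -
  obtain P where P: "P \<in> projections_trace_le k" "best_rank k A = P ** A"
    by (rule best_rank_eq_projection)
  have "frob_sq (P ** A) \<le> (\<Sum>i\<in>UNIV. P$i \<bullet> ((B ** transpose B) *v P$i) + c * (P$i \<bullet> P$i))"
    using assms(1)
    by (simp add: frob_sq_matrix_mult_rows loewner_le_def quad_add_scalar_mat sum_mono)
  also have "\<dots> = frob_sq (P ** B) + c * (P \<bullet> P)"
    by (simp add: sum.distrib frob_sq_matrix_mult_rows inner_vec_def[of P] sum_distrib_left)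
  also have "\<dots> \<le> frob_sq (best_rank k B) + real k * c"
  proof -
    have "P \<bullet> P \<le> real k"
      using P(1) inner_self_projection[of P] by (simp add: projections_trace_le_def)
    then have "c * (P \<bullet> P) \<le> real k * c"
      using assms(2) by (simp add: mult_left_mono mult.commute)
    then show ?thesis
      using frob_sq_projection_le_best_rank[OF P(1), of B] by linarith
  qed
  finally show ?thesis using P(2) by simp
qed

subsection \<open>Moore--Penrose pseudoinverse\<close>

definition penrose :: "real^'c^'r \<Rightarrow> real^'r^'c \<Rightarrow> bool" where
  "penrose A X \<longleftrightarrow> A ** X ** A = A \<and> X ** A ** X = X \<and>
                    transpose (A ** X) = A ** X \<and> transpose (X ** A) = X ** A"

lemma penrose_transpose: "penrose A X \<Longrightarrow> penrose (transpose A) (transpose X)"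
  unfolding penrose_def
  by (metis matrix_transpose_mul matrix_mul_assoc transpose_transpose)

lemma penrose_factor:
  assumes X: "penrose A X" and Y: "penrose A Y"
  shows "X = X ** A ** Y"
proof -
  have X2: "X ** A ** X = X" and X3: "transpose (A ** X) = A ** X"
    using X by (auto simp: penrose_def)
  have Y1: "A ** Y ** A = A" and Y3: "transpose (A ** Y) = A ** Y"
    using Y by (auto simp: penrose_def)
  have "X = X ** transpose (A ** X)" using X2 X3 by (simp add: matrix_mul_assoc)
  also have "\<dots> = X ** transpose X ** transpose (A ** Y ** A)"
    using Y1 by (simp add: matrix_transpose_mul matrix_mul_assoc)
  also have "\<dots> = X ** transpose (A ** X) ** transpose (A ** Y)"
    by (simp add: matrix_transpose_mul matrix_mul_assoc)
  also have "\<dots> = X ** A ** Y"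
    using X2 X3 Y3 by (simp add: matrix_mul_assoc)
  finally show ?thesis .
qed

lemma penrose_unique:
  assumes X: "penrose A X" and Y: "penrose A Y"
  shows "X = Y"
proof -
  have "transpose Y = transpose Y ** transpose A ** transpose X"
    using penrose_factor[OF penrose_transpose[OF Y] penrose_transpose[OF X]] .
  then have "Y = X ** A ** Y"
    by (metis matrix_transpose_mul matrix_mul_assoc transpose_transpose)
  with penrose_factor[OF X Y] show ?thesis by simp
qed

lemma pinv_eqI: "penrose A X \<Longrightarrow> pinv A = X"
  unfolding pinv_def
  by (rule the_equality) (auto simp: penrose_def intro: penrose_unique[unfolded penrose_def])

lemma pinv_inverse:
  fixes M :: "real^'n^'n"
  assumes "M ** Mi = mat 1" "Mi ** M = mat 1"
  shows "pinv M = Mi"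
  using assms by (intro pinv_eqI) (simp add: penrose_def matrix_mul_assoc[symmetric])

lemma penrose_inverse_add_kernel_projection:
  fixes M Q N' :: "real^'n^'n"
  assumes symQ: "transpose Q = Q" and idemQ: "Q ** Q = Q"
    and MQ: "M ** Q = 0" and QM: "Q ** M = 0"
    and inv: "(M + Q) ** N' = mat 1" "N' ** (M + Q) = mat 1"
  shows "penrose M (N' - Q)"
proof -
  have QN': "Q ** N' = Q"
    using arg_cong[OF inv(1), of "\<lambda>Z. Q ** Z"]
    by (simp add: matrix_mul_assoc matrix_add_ldistrib QM idemQ)
  have N'Q: "N' ** Q = Q"
    using arg_cong[OF inv(2), of "\<lambda>Z. Z ** Q"]
    by (simp add: matrix_mul_assoc[symmetric] matrix_add_rdistrib MQ idemQ)
  have MX: "M ** (N' - Q) = mat 1 - Q"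
    using inv(1) by (simp add: matrix_diff_ldistrib matrix_add_rdistrib MQ QN' algebra_simps)
  have XM: "(N' - Q) ** M = mat 1 - Q"
    using inv(2) by (simp add: matrix_diff_rdistrib matrix_add_ldistrib QM N'Q algebra_simps)
  have QX: "Q ** (N' - Q) = 0" by (simp add: matrix_diff_ldistrib QN' idemQ)
  show ?thesis
    unfolding penrose_def MX XM by (simp add: matrix_diff_rdistrib QM QX transpose_diff symQ)
qed

lemma penrose_exists_symmetric:
  fixes M :: "real^'n^'n"
  assumes symM: "transpose M = M"
  obtains X where "penrose M X"
proof -
  obtain Bs where Bs: "finite_orthonormal Bs" "span Bs = {x. M *v x = 0}"
    using finite_orthonormal_basis_subspace[OF linear_subspace_kernel[OF matrix_vector_mul_linear]]
    by metis
  define Q where "Q = proj_matrix Bs"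
  have symQ: "transpose Q = Q" and idemQ: "Q ** Q = Q"
    using Bs(1) by (simp_all add: Q_def transpose_proj_matrix proj_matrix_idem)
  have Q_kernel: "Q *v x = x" if "M *v x = 0" for x
    using Bs that by (simp add: Q_def proj_matrix_vector_span)
  have "M *v (Q *v x) = 0" for x
    using proj_matrix_vector_in_span[of Bs x] Bs(2) by (simp add: Q_def)
  then have MQ: "M ** Q = 0" by (simp add: matrix_eq matrix_vector_mul_assoc)
  then have QM: "Q ** M = 0"
    by (metis matrix_transpose_mul symM symQ transpose_iff transpose_mat mat_0)
  have "x = 0" if "(M + Q) *v x = 0" for x
  proof -
    have sum0: "M *v x + Q *v x = 0" using that by (simp add: matrix_vector_mult_add_rdistrib)
    have "(Q *v x) \<bullet> (M *v x) = ((M ** Q) *v x) \<bullet> x"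
      by (simp add: inner_matrix_vector_transpose[of "Q *v x" M] symM matrix_vector_mul_assoc)
    then have "(Q *v x) \<bullet> (Q *v x) = 0"
      using sum0 by (simp add: MQ eq_neg_iff_add_eq_0[symmetric])
    then show ?thesis using sum0 Q_kernel[of x] by simp
  qed
  then obtain N' where "N' ** (M + Q) = mat 1" using matrix_left_invertible_ker by blast
  moreover then have "(M + Q) ** N' = mat 1" using matrix_left_right_inverse by blast
  ultimately show ?thesis
    using that penrose_inverse_add_kernel_projection[OF symQ idemQ MQ QM] by blast
qed

lemma quad_pinv_nonneg:
  fixes M :: "real^'n^'n"
  assumes symM: "transpose M = M" and psd: "\<And>x. 0 \<le> x \<bullet> (M *v x)"
  shows "0 \<le> a \<bullet> (pinv M *v a)"
proof -
  obtain X where X: "penrose M X" using penrose_exists_symmetric[OF symM] .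
  have "penrose M (transpose X)" using penrose_transpose[OF X] by (simp only: symM)
  then have symX: "transpose X = X" using penrose_unique[OF X] by (metis sym)
  have "a \<bullet> (pinv M *v a) = a \<bullet> ((X ** M ** X) *v a)"
    using X pinv_eqI[OF X] by (simp add: penrose_def)
  also have "\<dots> = (X *v a) \<bullet> (M *v (X *v a))"
    by (simp add: inner_matrix_vector_transpose[of a X] symX matrix_vector_mul_assoc[symmetric])
  finally show ?thesis using psd by simp
qed

subsection \<open>Loewner order and inverses\<close>

lemma coercive_matrix_inverse:
  fixes M :: "real^'n^'n"
  assumes c: "c > 0" and coercive: "\<And>x. c * (x \<bullet> x) \<le> x \<bullet> (M *v x)"
  obtains Mi where "M ** Mi = mat 1" "Mi ** M = mat 1"
proof -
  have "x = 0" if "M *v x = 0" for x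
    using coercive[of x] that c by (smt (verit) inner_gt_zero_iff matrix_vector_mult_0_right
        inner_zero_right mult_pos_pos)
  then obtain Mi where "Mi ** M = mat 1" using matrix_left_invertible_ker by blast
  then show ?thesis using that matrix_left_right_inverse by blast
qed

lemma quad_inverse_le:
  fixes X Y Xi Yi :: "real^'n^'n"
  assumes symX: "transpose X = X" and psd: "\<And>x. 0 \<le> x \<bullet> (X *v x)" and "0 \<le> c"
    and le: "\<And>x. c * (x \<bullet> (X *v x)) \<le> x \<bullet> (Y *v x)"
    and Xi: "X ** Xi = mat 1" and Yi: "Y ** Yi = mat 1"
  shows "c * (a \<bullet> (Yi *v a)) \<le> a \<bullet> (Xi *v a)"
proof -
  define z where "z = Yi *v a"
  define w where "w = Xi *v a"
  have Yz: "Y *v z = a" using Yi by (simp add: z_def matrix_vector_mul_assoc)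
  have Xw: "X *v w = a" using Xi by (simp add: w_def matrix_vector_mul_assoc)
  have Xwz: "w \<bullet> (X *v z) = a \<bullet> z"
    using Xw inner_matrix_vector_transpose[of w X z] symX by simp
  \<comment> \<open>expand \<open>0 \<le> (c z - w)\<^sup>T X (c z - w)\<close> and use \<open>c z\<^sup>T X z \<le> z\<^sup>T Y z = a\<^sup>T z\<close>\<close>
  have "0 \<le> (c *\<^sub>R z - w) \<bullet> (X *v (c *\<^sub>R z - w))" by (rule psd)
  also have "\<dots> = c * (c * (z \<bullet> (X *v z))) - 2 * c * (a \<bullet> z) + a \<bullet> w"
    by (simp add: matrix_vector_mult_diff_distrib matrix_vector_mult_scaleR inner_diff_left
        inner_diff_right Xw Xwz inner_commute[of z a] inner_commute[of w a] algebra_simps)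
  also have "\<dots> \<le> c * (a \<bullet> z) - 2 * c * (a \<bullet> z) + a \<bullet> w"
    using le[of z] Yz \<open>0 \<le> c\<close>
    by (smt (verit) inner_commute mult_left_mono mult_right_mono)
  finally show ?thesis by (simp add: z_def w_def)
qed

lemma quad_pinv_shift_within_factor_two:
  fixes G H :: "real^'n^'n"
  assumes symG: "transpose G = G" and symH: "transpose H = H"
    and psdH: "\<And>x. 0 \<le> x \<bullet> (H *v x)"
    and lower: "loewner_le H G" and upper: "loewner_le G (H + (1/2 * \<gamma>) *\<^sub>R mat 1)"
    and "0 \<le> \<gamma>" "\<gamma> \<le> \<mu>" "\<mu> \<le> 3/2 * \<gamma>"
  shows "1/2 * (a \<bullet> (pinv (G + \<gamma> *\<^sub>R mat 1) *v a)) \<le> a \<bullet> (pinv (H + \<mu> *\<^sub>R mat 1) *v a)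
    \<and> a \<bullet> (pinv (H + \<mu> *\<^sub>R mat 1) *v a) \<le> 2 * (a \<bullet> (pinv (G + \<gamma> *\<^sub>R mat 1) *v a))"
proof -
  define X where "X = G + \<gamma> *\<^sub>R mat 1"
  define Y where "Y = H + \<mu> *\<^sub>R mat 1"
  have HG: "x \<bullet> (H *v x) \<le> x \<bullet> (G *v x)"
    and GH: "x \<bullet> (G *v x) \<le> x \<bullet> (H *v x) + 1/2 * \<gamma> * (x \<bullet> x)" for x
    using lower upper by (simp_all add: loewner_le_def quad_add_scalar_mat)
  have qX: "x \<bullet> (X *v x) = x \<bullet> (G *v x) + \<gamma> * (x \<bullet> x)"
    and qY: "x \<bullet> (Y *v x) = x \<bullet> (H *v x) + \<mu> * (x \<bullet> x)" for x
    by (simp_all add: X_def Y_def quad_add_scalar_mat)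
  have symX: "transpose X = X" and symY: "transpose Y = Y"
    by (simp_all add: X_def Y_def transpose_add transpose_scalar symG symH)
  have psdX: "0 \<le> x \<bullet> (X *v x)" for x
    using qX[of x] HG[of x] psdH[of x] \<open>0 \<le> \<gamma>\<close> by simp
  show ?thesis
  proof (cases "\<gamma> = 0")
    case True
    then have "X = Y"
      using \<open>\<gamma> \<le> \<mu>\<close> \<open>\<mu> \<le> 3/2 * \<gamma>\<close> HG GH
      by (auto simp: X_def Y_def intro!: symmetric_matrix_eqI_quad[OF symG symH] antisym)
    then show ?thesis
      using quad_pinv_nonneg[OF symX psdX, of a] by (simp add: X_def Y_def)
  next
    case False
    then have "0 < \<gamma>" using \<open>0 \<le> \<gamma>\<close> by simp
    have XY: "1/2 * (x \<bullet> (X *v x)) \<le> x \<bullet> (Y *v x)"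
      and YX: "1/2 * (x \<bullet> (Y *v x)) \<le> x \<bullet> (X *v x)" for x
      using qX[of x] qY[of x] HG[of x] GH[of x] psdH[of x] inner_ge_zero[of x]
        mult_right_mono[OF \<open>\<gamma> \<le> \<mu>\<close> inner_ge_zero[of x]]
        mult_right_mono[OF \<open>\<mu> \<le> 3/2 * \<gamma>\<close> inner_ge_zero[of x]]
      by (simp_all add: algebra_simps)
    have coerciveX: "\<gamma> * (x \<bullet> x) \<le> x \<bullet> (X *v x)"
      and coerciveY: "1/2 * \<gamma> * (x \<bullet> x) \<le> x \<bullet> (Y *v x)" for x
      using qX[of x] XY[of x] HG[of x] psdH[of x] by simp_all
    obtain Xi where Xi: "X ** Xi = mat 1" "Xi ** X = mat 1"
      using coercive_matrix_inverse[OF \<open>0 < \<gamma>\<close> coerciveX] by blast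
    obtain Yi where Yi: "Y ** Yi = mat 1" "Yi ** Y = mat 1"
      using coercive_matrix_inverse[OF _ coerciveY] \<open>0 < \<gamma>\<close> by auto
    have psdY: "0 \<le> x \<bullet> (Y *v x)" for x
      using XY[of x] psdX[of x] by linarith
    show ?thesis
      using quad_inverse_le[OF symX psdX _ XY Xi(1) Yi(1), of a]
        quad_inverse_le[OF symY psdY _ YX Yi(1) Xi(1), of a]
      by (simp add: pinv_inverse[OF Xi] pinv_inverse[OF Yi] flip: X_def Y_def)
  qed
qed

theorem mainTheorem11:
  fixes A :: "real^'d^'n" and B :: "real^'m^'n" and k :: nat
  assumes "k \<ge> 1"
    and "loewner_le (B ** transpose B) (A ** transpose A)"
    and "loewner_le (A ** transpose A)
           (B ** transpose B + ((1/2) * (frob_sq (A - best_rank k A) / real k)) *\<^sub>R mat 1)"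
  shows "\<forall>i. (1/2) * ridge_lev k A i \<le>
               column i A \<bullet> (pinv (B ** transpose B +
                  ((frob_sq A - frob_sq (best_rank k B)) / real k) *\<^sub>R mat 1) *v column i A)
          \<and> column i A \<bullet> (pinv (B ** transpose B +
                  ((frob_sq A - frob_sq (best_rank k B)) / real k) *\<^sub>R mat 1) *v column i A)
              \<le> 2 * ridge_lev k A i"
proof
  fix i
  define \<gamma> where "\<gamma> = frob_sq (A - best_rank k A) / real k"
  define \<mu> where "\<mu> = (frob_sq A - frob_sq (best_rank k B)) / real k"
  have kpos: "real k > 0" using assms(1) by simp
  have "0 \<le> \<gamma>" by (simp add: \<gamma>_def frob_sq_nonneg)
  have "frob_sq (best_rank k B) \<le> frob_sq (best_rank k A)"
    using frob_sq_best_rank_mono[OF assms(2)] .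
  then have "\<gamma> \<le> \<mu>"
    using kpos by (simp add: \<gamma>_def \<mu>_def frob_sq_best_rank_residual divide_right_mono)
  have "frob_sq (best_rank k A) \<le> frob_sq (best_rank k B) + real k * (1/2 * \<gamma>)"
    using frob_sq_best_rank_le_add[OF assms(3)[folded \<gamma>_def]] \<open>0 \<le> \<gamma>\<close> by simp
  then have "\<mu> \<le> 3/2 * \<gamma>"
    using kpos by (simp add: \<gamma>_def \<mu>_def frob_sq_best_rank_residual field_simps)
  show "(1/2) * ridge_lev k A i \<le> column i A \<bullet> (pinv (B ** transpose B + \<mu> *\<^sub>R mat 1) *v column i A)
    \<and> column i A \<bullet> (pinv (B ** transpose B + \<mu> *\<^sub>R mat 1) *v column i A) \<le> 2 * ridge_lev k A i"
    unfolding ridge_lev_def \<gamma>_def[symmetric]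
    by (rule quad_pinv_shift_within_factor_two[OF transpose_gram transpose_gram quad_gram_nonneg
          assms(2) assms(3)[folded \<gamma>_def] \<open>0 \<le> \<gamma>\<close> \<open>\<gamma> \<le> \<mu>\<close> \<open>\<mu> \<le> 3/2 * \<gamma>\<close>])
qed

end
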